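(* Let $\mathcal{N}:\mathcal{L}(\mathbb{C}^{d_A})\to\mathcal{L}(\mathbb{C}^{d_B})$ be a quantum channel and let $d=\min\{d_A,d_B\}$. Then for all $n,m\in\mathbb{N}$, $$\mathcal{P}^{n\to m}(\mathcal{N}(\mathcal{Q}_{d_A}))\subseteq \mathcal{P}^{n\to m}(\mathcal{Q}_d).$$
   Context: A quantum channel is a completely positive trace-preserving (CPTP) map; $\mathcal{L}(\mathbb{C}^k)$ denotes the linear operators on $\mathbb{C}^k$. For a channel $\mathcal{N}:\mathcal{L}(\mathbb{C}^{d_A})\to\mathcal{L}(\mathbb{C}^{d_B})$ and $n,m\in\mathbb{N}$, $\mathcal{P}^{n\to m}(\mathcal{N}(\mathcal{Q}_{d_A}))$ denotes the set of all $n\times m$ matrices $P$ with $P_{ij}=\operatorname{Tr}[\Lambda_j\,\mathcal{N}(\rho_i)]$, where $\rho_1,\dots,\rho_n$ are density matrices on $\mathbb{C}^{d_A}$ and $\{\Lambda_j\}_{j=1}^m$ is a POVM on $\mathbb{C}^{d_B}$ (such matrices are called channel matrices). $\mathcal{P}^{n\to m}(\mathcal{Q}_d)$ denotes this set when $\mathcal{N}$ is the identity channel on $\mathcal{L}(\mathbb{C}^d)$. *)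

theory Defs
  imports "Jordan_Normal_Form.Matrix" "Jordan_Normal_Form.Conjugate" Complex_Main
begin

definition mtrace :: "complex mat \<Rightarrow> complex" where
  "mtrace A = (\<Sum>i<dim_row A. A $$ (i,i))"

definition psd :: "nat \<Rightarrow> complex mat \<Rightarrow> bool" where
  "psd k A \<longleftrightarrow> A \<in> carrier_mat k k \<and>
     (\<forall>v \<in> carrier_vec k. conjugate v \<bullet> (A *\<^sub>v v) \<in> \<real> \<and> 0 \<le> Re (conjugate v \<bullet> (A *\<^sub>v v)))"

definition density :: "nat \<Rightarrow> complex mat \<Rightarrow> bool" where
  "density k \<rho> \<longleftrightarrow> psd k \<rho> \<and> mtrace \<rho> = 1"

definition povm :: "nat \<Rightarrow> nat \<Rightarrow> (nat \<Rightarrow> complex mat) \<Rightarrow> bool" where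
  "povm k m \<Lambda> \<longleftrightarrow> (\<forall>j<m. psd k (\<Lambda> j)) \<and>
     (\<forall>a<k. \<forall>b<k. (\<Sum>j<m. \<Lambda> j $$ (a,b)) = (if a = b then 1 else 0))"

definition lin_map :: "nat \<Rightarrow> nat \<Rightarrow> (complex mat \<Rightarrow> complex mat) \<Rightarrow> bool" where
  "lin_map dA dB N \<longleftrightarrow>
     (\<forall>A \<in> carrier_mat dA dA. N A \<in> carrier_mat dB dB) \<and>
     (\<forall>A \<in> carrier_mat dA dA. \<forall>B \<in> carrier_mat dA dA. N (A + B) = N A + N B) \<and>
     (\<forall>c. \<forall>A \<in> carrier_mat dA dA. N (c \<cdot>\<^sub>m A) = c \<cdot>\<^sub>m N A)"

text \<open>The map id_k (x) N acting on L(C^k (x) C^dA): a (k*dA) x (k*dA) matrix is viewed as a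
  k x k block matrix with dA x dA blocks, and N is applied blockwise.\<close>
definition ampl :: "nat \<Rightarrow> nat \<Rightarrow> nat \<Rightarrow> (complex mat \<Rightarrow> complex mat) \<Rightarrow> complex mat \<Rightarrow> complex mat" where
  "ampl k dA dB N X = mat (k*dB) (k*dB) (\<lambda>(i,j).
     N (mat dA dA (\<lambda>(p,q). X $$ ((i div dB)*dA + p, (j div dB)*dA + q))) $$ (i mod dB, j mod dB))"

definition completely_positive :: "nat \<Rightarrow> nat \<Rightarrow> (complex mat \<Rightarrow> complex mat) \<Rightarrow> bool" where
  "completely_positive dA dB N \<longleftrightarrow>
     (\<forall>k X. psd (k*dA) X \<longrightarrow> psd (k*dB) (ampl k dA dB N X))"

definition trace_preserving :: "nat \<Rightarrow> (complex mat \<Rightarrow> complex mat) \<Rightarrow> bool" where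
  "trace_preserving dA N \<longleftrightarrow> (\<forall>A \<in> carrier_mat dA dA. mtrace (N A) = mtrace A)"

definition quantum_channel :: "nat \<Rightarrow> nat \<Rightarrow> (complex mat \<Rightarrow> complex mat) \<Rightarrow> bool" where
  "quantum_channel dA dB N \<longleftrightarrow>
     lin_map dA dB N \<and> completely_positive dA dB N \<and> trace_preserving dA N"

definition channel_matrices ::
  "nat \<Rightarrow> nat \<Rightarrow> (complex mat \<Rightarrow> complex mat) \<Rightarrow> nat \<Rightarrow> nat \<Rightarrow> complex mat set" where
  "channel_matrices dA dB N n m = {P. \<exists>\<rho> \<Lambda>. (\<forall>i<n. density dA (\<rho> i)) \<and> povm dB m \<Lambda> \<and>
      P = mat n m (\<lambda>(i,j). mtrace (\<Lambda> j * N (\<rho> i)))}"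

definition quantum_matrices :: "nat \<Rightarrow> nat \<Rightarrow> nat \<Rightarrow> complex mat set" where
  "quantum_matrices d n m = channel_matrices d d id n m"

end

theory Submission
  imports Defs
begin

(* If dB \<le> dA, push the states through N and keep the POVM. If dA < dB, keep the states and pull
  the POVM back along the dual map M of N, defined by Tr(\<Lambda> N(X)) = Tr(M(\<Lambda>) X). Trace
  preservation makes M unital, so the M(\<Lambda>_j) again sum to the identity, and M(\<Lambda>) is positive
  semidefinite because <f, M(\<Lambda>) f> = Tr(\<Lambda> N(f f\<^sup>\<dagger>)) is the trace of a product of two
  positive semidefinite matrices. That trace is nonnegative: write one factor as a sum of rank-one
  terms u u\<^sup>\<dagger>, obtained by Gaussian elimination on its quadratic form. *)

definition sesq :: "nat \<Rightarrow> (nat \<Rightarrow> nat \<Rightarrow> complex) \<Rightarrow> (nat \<Rightarrow> complex) \<Rightarrow> (nat \<Rightarrow> complex) \<Rightarrow> complex" where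
  "sesq k a f g = (\<Sum>i<k. \<Sum>j<k. cnj (f i) * a i j * g j)"

definition psd_form :: "nat \<Rightarrow> (nat \<Rightarrow> nat \<Rightarrow> complex) \<Rightarrow> bool" where
  "psd_form k a \<longleftrightarrow> (\<forall>f. 0 \<le> sesq k a f f)"

definition basis_fun :: "nat \<Rightarrow> nat \<Rightarrow> complex" where
  "basis_fun r i = (if i = r then 1 else 0)"

lemma complex_nonneg_iff: "0 \<le> (z::complex) \<longleftrightarrow> Im z = 0 \<and> 0 \<le> Re z"
  by (auto simp: less_eq_complex_def)

lemma cnj_nonneg: "0 \<le> (z::complex) \<Longrightarrow> cnj z = z"
  by (simp add: complex_nonneg_iff complex_eq_iff)

lemma sesq_add_left: "sesq k a (\<lambda>i. f i + g i) h = sesq k a f h + sesq k a g h"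
  by (simp add: sesq_def distrib_right sum.distrib)

lemma sesq_add_right: "sesq k a f (\<lambda>i. g i + h i) = sesq k a f g + sesq k a f h"
  by (simp add: sesq_def distrib_left sum.distrib)

lemma sesq_scale_left: "sesq k a (\<lambda>i. s * f i) g = cnj s * sesq k a f g"
  by (simp add: sesq_def sum_distrib_left mult_ac)

lemma sesq_scale_right: "sesq k a f (\<lambda>i. s * g i) = s * sesq k a f g"
  by (simp add: sesq_def sum_distrib_left mult_ac)

lemma sesq_expand:
  "sesq k a (\<lambda>i. f i + s * g i) (\<lambda>i. f i + s * g i) =
   sesq k a f f + s * sesq k a f g + cnj s * sesq k a g f + cnj s * s * sesq k a g g"
  by (simp add: sesq_add_left sesq_add_right sesq_scale_left sesq_scale_right algebra_simps)

lemma sesq_basis_left: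
  assumes "r < k" shows "sesq k a (basis_fun r) g = (\<Sum>j<k. a r j * g j)"
proof -
  have "sesq k a (basis_fun r) g = (\<Sum>i<k. if i = r then \<Sum>j<k. a i j * g j else 0)"
    unfolding sesq_def basis_fun_def by (intro sum.cong) auto
  with assms show ?thesis by simp
qed

lemma sesq_basis_right:
  assumes "r < k" shows "sesq k a f (basis_fun r) = (\<Sum>i<k. cnj (f i) * a i r)"
  using assms by (simp add: sesq_def basis_fun_def if_distrib cong: if_cong)

lemma sesq_basis:
  assumes "i < k" "j < k" shows "sesq k a (basis_fun i) (basis_fun j) = a i j"
  using assms by (simp add: sesq_basis_left basis_fun_def if_distrib cong: if_cong)

lemma psd_form_sesq_hermitian:
  assumes "psd_form k a"
  shows "sesq k a g f = cnj (sesq k a f g)"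
proof -
  let ?x = "sesq k a f g" and ?y = "sesq k a g f"
  have real_ff: "Im (sesq k a f f) = 0" and real_gg: "Im (sesq k a g g) = 0"
    using assms by (auto simp: psd_form_def complex_nonneg_iff)
  have "0 \<le> sesq k a (\<lambda>i. f i + 1 * g i) (\<lambda>i. f i + 1 * g i)"
    using assms psd_form_def by blast
  then have "Im ?x + Im ?y = 0"
    using real_ff real_gg by (simp only: sesq_expand) (simp add: complex_nonneg_iff)
  moreover have "0 \<le> sesq k a (\<lambda>i. f i + \<i> * g i) (\<lambda>i. f i + \<i> * g i)"
    using assms psd_form_def by blast
  then have "Re ?x - Re ?y = 0"
    using real_ff real_gg by (simp only: sesq_expand) (simp add: complex_nonneg_iff)
  ultimately show ?thesis by (simp add: complex_eq_iff)
qed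

lemma psd_form_hermitian:
  assumes "psd_form k a" "i < k" "j < k" shows "a j i = cnj (a i j)"
  using psd_form_sesq_hermitian[OF assms(1), of "basis_fun j" "basis_fun i"] assms
  by (simp add: sesq_basis)

lemma psd_form_diag_nonneg: "psd_form k a \<Longrightarrow> r < k \<Longrightarrow> 0 \<le> a r r"
  by (metis psd_form_def sesq_basis)

lemma psd_form_zero_diag:
  assumes psd: "psd_form k a" and r: "r < k" and zero: "a r r = 0" and j: "j < k"
  shows "a j r = 0" and "a r j = 0"
proof -
  let ?c = "a j r" and ?R = "Re (a j j)"
  have conj: "a r j = cnj ?c" using psd_form_hermitian[OF psd j r] .
  show "?c = 0"
  proof (rule ccontr)
    assume "?c \<noteq> 0"
    define s where "s = - complex_of_real ((?R + 1) / 2) / ?c"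
    have sc: "s * ?c = - complex_of_real ((?R + 1) / 2)"
      using \<open>?c \<noteq> 0\<close> by (simp add: s_def)
    have "0 \<le> sesq k a (\<lambda>i. basis_fun j i + s * basis_fun r i) (\<lambda>i. basis_fun j i + s * basis_fun r i)"
      using psd psd_form_def by blast
    also have "\<dots> = a j j + s * ?c + cnj (s * ?c)"
      using r j zero conj by (simp add: sesq_expand sesq_basis)
    also have "\<dots> = a j j - complex_of_real (?R + 1)"
      unfolding sc by simp
    finally show False by (simp add: complex_nonneg_iff)
  qed
  with conj show "a r j = 0" by simp
qed

lemma sesq_schur_complement:
  "sesq k (\<lambda>i j. a i j - a i r * a r j / a r r) f f =
   sesq k a f f - (\<Sum>i<k. cnj (f i) * a i r) * (\<Sum>j<k. a r j * f j) / a r r"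
  unfolding sesq_def
  by (simp add: sum_subtractf algebra_simps sum_product sum_divide_distrib) (rule sum.swap)

lemma psd_form_schur_complement:
  assumes psd: "psd_form k a" and r: "r < k" and nz: "a r r \<noteq> 0"
  shows "psd_form k (\<lambda>i j. a i j - a i r * a r j / a r r)"
  unfolding psd_form_def
proof
  fix f
  define c where "c = sesq k a f (basis_fun r)"
  define s where "s = - cnj c / a r r"
  have d: "sesq k a (basis_fun r) f = cnj c"
    unfolding c_def by (rule psd_form_sesq_hermitian[OF psd])
  have rr: "cnj (a r r) = a r r" using cnj_nonneg psd_form_diag_nonneg[OF psd r] by blast
  \<comment> \<open>\<open>s\<close> minimises the form of \<open>a\<close> on the line through \<open>f\<close> in the direction of the \<open>r\<close>-th basis vector\<close>
  have "0 \<le> sesq k a (\<lambda>i. f i + s * basis_fun r i) (\<lambda>i. f i + s * basis_fun r i)"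
    using psd psd_form_def by blast
  also have "\<dots> = sesq k a f f + s * c + cnj s * cnj c + cnj s * s * a r r"
    using r by (simp add: sesq_expand c_def d sesq_basis)
  also have "\<dots> = sesq k a f f - c * cnj c / a r r"
    using nz rr by (simp add: s_def field_simps)
  also have "\<dots> = sesq k (\<lambda>i j. a i j - a i r * a r j / a r r) f f"
    using d r by (simp add: sesq_schur_complement c_def sesq_basis_left sesq_basis_right)
  finally show "0 \<le> sesq k (\<lambda>i j. a i j - a i r * a r j / a r r) f f" .
qed

lemma psd_form_rank_one_factor:
  assumes psd: "psd_form k a" and r: "r < k" and j: "j < k"
  shows "a i r / complex_of_real (sqrt (Re (a r r))) * cnj (a j r / complex_of_real (sqrt (Re (a r r))))
    = a i r * a r j / a r r"
proof -
  have "0 \<le> a r r" using psd_form_diag_nonneg[OF psd r] .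
  then have "complex_of_real (sqrt (Re (a r r))) * complex_of_real (sqrt (Re (a r r))) = a r r"
    by (simp add: complex_nonneg_iff complex_eq_iff flip: of_real_mult)
  moreover have "cnj (a j r) = a r j" using psd_form_hermitian[OF psd j r] by simp
  ultimately show ?thesis by (metis complex_cnj_complex_of_real complex_cnj_divide times_divide_times_eq)
qed

text \<open>Gaussian elimination: a zero pivot forces its row and column to vanish, a nonzero pivot
  splits off a rank-one term and leaves the positive semidefinite Schur complement.\<close>
lemma psd_form_rank_one_decomposition_from:
  assumes "r \<le> k" "psd_form k a" "\<forall>i<k. \<forall>j<k. i < r \<or> j < r \<longrightarrow> a i j = 0"
  shows "\<exists>us. \<forall>i<k. \<forall>j<k. a i j = (\<Sum>u\<leftarrow>us. u i * cnj (u j))"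
  using assms
proof (induction r arbitrary: a rule: inc_induct)
  case base
  then show ?case by (intro exI[of _ "[]"]) auto
next
  case (step r)
  show ?case
  proof (cases "a r r = 0")
    case True
    have "\<forall>i<k. \<forall>j<k. i < Suc r \<or> j < Suc r \<longrightarrow> a i j = 0"
      using step.prems psd_form_zero_diag[OF step.prems(1) step.hyps(2) True]
      by (metis less_Suc_eq)
    then show ?thesis using step.IH[OF step.prems(1)] by blast
  next
    case False
    define a' where "a' = (\<lambda>i j. a i j - a i r * a r j / a r r)"
    have "psd_form k a'"
      unfolding a'_def using psd_form_schur_complement[OF step.prems(1) step.hyps(2) False] .
    moreover have "\<forall>i<k. \<forall>j<k. i < Suc r \<or> j < Suc r \<longrightarrow> a' i j = 0"
      using step.prems(2) step.hyps(2) False unfolding a'_def by (auto simp: less_Suc_eq)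
    ultimately obtain us where us: "\<forall>i<k. \<forall>j<k. a' i j = (\<Sum>u\<leftarrow>us. u i * cnj (u j))"
      using step.IH by blast
    let ?u = "\<lambda>i. a i r / complex_of_real (sqrt (Re (a r r)))"
    have "a i j = (\<Sum>u\<leftarrow>?u # us. u i * cnj (u j))" if "i < k" "j < k" for i j
    proof -
      have "?u i * cnj (?u j) = a i r * a r j / a r r"
        using psd_form_rank_one_factor[OF step.prems(1) step.hyps(2) \<open>j < k\<close>] .
      then show ?thesis using us[rule_format, OF that] by (simp add: a'_def diff_eq_eq)
    qed
    then show ?thesis by blast
  qed
qed

lemma psd_form_rank_one_decomposition:
  "psd_form k a \<Longrightarrow> \<exists>us. \<forall>i<k. \<forall>j<k. a i j = (\<Sum>u\<leftarrow>us. u i * cnj (u j))"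
  using psd_form_rank_one_decomposition_from[of 0 k a] by simp

lemma sesq_as_trace: "sesq k b u u = (\<Sum>i<k. \<Sum>j<k. u i * cnj (u j) * b j i)"
  unfolding sesq_def by (subst sum.swap) (simp add: mult_ac)

lemma psd_form_trace_nonneg:
  assumes a: "psd_form k a" and b: "psd_form k b"
  shows "0 \<le> (\<Sum>i<k. \<Sum>j<k. a i j * b j i)"
proof -
  obtain us where us: "\<forall>i<k. \<forall>j<k. a i j = (\<Sum>u\<leftarrow>us. u i * cnj (u j))"
    using psd_form_rank_one_decomposition[OF a] by blast
  have "(\<Sum>i<k. \<Sum>j<k. (\<Sum>u\<leftarrow>vs. u i * cnj (u j)) * b j i) = (\<Sum>u\<leftarrow>vs. sesq k b u u)" for vs
    by (induction vs) (simp_all add: sesq_as_trace distrib_right sum.distrib)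
  moreover have "0 \<le> (\<Sum>u\<leftarrow>us. sesq k b u u)"
    using b unfolding psd_form_def by (intro sum_list_nonneg) auto
  ultimately show ?thesis using us by simp
qed

lemma psd_iff_psd_form: "psd k A \<longleftrightarrow> A \<in> carrier_mat k k \<and> psd_form k (\<lambda>i j. A $$ (i,j))"
proof -
  have quad: "conjugate v \<bullet> (A *\<^sub>v v) = sesq k (\<lambda>i j. A $$ (i,j)) (\<lambda>i. v $ i) (\<lambda>i. v $ i)"
    if "A \<in> carrier_mat k k" "v \<in> carrier_vec k" for v
    using that unfolding sesq_def scalar_prod_def
    by (simp add: lessThan_atLeast0 sum_distrib_left mult.assoc scalar_prod_def)
  have nonneg: "(z \<in> \<real> \<and> 0 \<le> Re z) \<longleftrightarrow> 0 \<le> z" for z :: complex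
    by (simp add: complex_nonneg_iff complex_is_Real_iff)
  show ?thesis
  proof
    assume psd: "psd k A"
    then have A: "A \<in> carrier_mat k k" unfolding psd_def by blast
    have "0 \<le> sesq k (\<lambda>i j. A $$ (i,j)) f f" for f
    proof -
      have "0 \<le> conjugate (vec k f) \<bullet> (A *\<^sub>v vec k f)"
        using psd nonneg unfolding psd_def by auto
      then show ?thesis using quad[OF A, of "vec k f"] by (simp add: sesq_def)
    qed
    with A show "A \<in> carrier_mat k k \<and> psd_form k (\<lambda>i j. A $$ (i,j))"
      unfolding psd_form_def by blast
  next
    assume "A \<in> carrier_mat k k \<and> psd_form k (\<lambda>i j. A $$ (i,j))"
    then show "psd k A" unfolding psd_def psd_form_def using quad nonneg by metis
  qed
qed

lemma psd_carrier: "psd k A \<Longrightarrow> A \<in> carrier_mat k k"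
  unfolding psd_def by blast

lemma psd_rank_one: "psd k (mat k k (\<lambda>(a,b). f a * cnj (f b)))"
  unfolding psd_iff_psd_form psd_form_def
proof (intro conjI allI)
  fix g
  have "sesq k (\<lambda>a b. mat k k (\<lambda>(a,b). f a * cnj (f b)) $$ (a,b)) g g
      = (\<Sum>a<k. cnj (g a) * f a) * cnj (\<Sum>a<k. cnj (g a) * f a)"
    unfolding sesq_def by (simp add: sum_product mult_ac sum_conjugate)
  also have "0 \<le> \<dots>" using conjugate_square_positive[of "\<Sum>a<k. cnj (g a) * f a"] by simp
  finally show "0 \<le> sesq k (\<lambda>a b. mat k k (\<lambda>(a,b). f a * cnj (f b)) $$ (a,b)) g g" .
qed simp

lemma mtrace_mult:
  assumes "A \<in> carrier_mat k k" "B \<in> carrier_mat k k"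
  shows "mtrace (A * B) = (\<Sum>i<k. \<Sum>j<k. A $$ (i,j) * B $$ (j,i))"
  using assms unfolding mtrace_def by (simp add: lessThan_atLeast0 scalar_prod_def)

lemma mtrace_mult_psd_nonneg:
  assumes "psd k A" "psd k B" shows "0 \<le> mtrace (A * B)"
  using assms psd_form_trace_nonneg[of k "\<lambda>i j. A $$ (i,j)" "\<lambda>i j. B $$ (i,j)"]
    mtrace_mult[OF psd_carrier psd_carrier, OF assms]
  by (simp add: psd_iff_psd_form)

definition mat_unit :: "nat \<Rightarrow> nat \<Rightarrow> nat \<Rightarrow> complex mat" where
  "mat_unit d a b = mat d d (\<lambda>(p,q). if p = a \<and> q = b then 1 else 0)"

lemma mat_unit_carrier [simp]: "mat_unit d a b \<in> carrier_mat d d"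
  unfolding mat_unit_def by simp

lemma mtrace_mat_unit: "a < d \<Longrightarrow> b < d \<Longrightarrow> mtrace (mat_unit d a b) = (if a = b then 1 else 0)"
proof -
  assume "a < d" "b < d"
  have "mtrace (mat_unit d a b) = (\<Sum>i<d. if i = a then (if a = b then 1 else 0) else 0)"
    unfolding mtrace_def mat_unit_def by (intro sum.cong) auto
  with \<open>a < d\<close> show ?thesis by simp
qed

definition restrict_mat :: "nat \<Rightarrow> complex mat \<Rightarrow> (nat \<times> nat) set \<Rightarrow> complex mat" where
  "restrict_mat d X S = mat d d (\<lambda>(p,q). if (p,q) \<in> S then X $$ (p,q) else 0)"

lemma linear_functional_restrict_mat:
  fixes \<phi> :: "complex mat \<Rightarrow> complex"
  assumes add: "\<And>A B. A \<in> carrier_mat d d \<Longrightarrow> B \<in> carrier_mat d d \<Longrightarrow> \<phi> (A + B) = \<phi> A + \<phi> B"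
    and smult: "\<And>c A. A \<in> carrier_mat d d \<Longrightarrow> \<phi> (c \<cdot>\<^sub>m A) = c * \<phi> A"
    and "finite S" "S \<subseteq> {..<d} \<times> {..<d}"
  shows "\<phi> (restrict_mat d X S) = (\<Sum>(a,b)\<in>S. X $$ (a,b) * \<phi> (mat_unit d a b))"
  using assms(3,4)
proof (induction S rule: finite_induct)
  case empty
  have "restrict_mat d X {} = 0 \<cdot>\<^sub>m mat_unit d 0 0"
    unfolding restrict_mat_def mat_unit_def by (intro eq_matI) auto
  then show ?case using smult[of "mat_unit d 0 0" 0] by simp
next
  case (insert x S)
  obtain a b where x: "x = (a,b)" by (cases x)
  have "restrict_mat d X (insert x S) = restrict_mat d X S + X $$ (a,b) \<cdot>\<^sub>m mat_unit d a b"
    using insert x unfolding restrict_mat_def mat_unit_def by (intro eq_matI) auto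
  then have "\<phi> (restrict_mat d X (insert x S)) = \<phi> (restrict_mat d X S) + X $$ (a,b) * \<phi> (mat_unit d a b)"
    by (simp add: add smult restrict_mat_def)
  then show ?case using insert x by simp
qed

lemma linear_functional_expand:
  fixes \<phi> :: "complex mat \<Rightarrow> complex"
  assumes "\<And>A B. A \<in> carrier_mat d d \<Longrightarrow> B \<in> carrier_mat d d \<Longrightarrow> \<phi> (A + B) = \<phi> A + \<phi> B"
    and "\<And>c A. A \<in> carrier_mat d d \<Longrightarrow> \<phi> (c \<cdot>\<^sub>m A) = c * \<phi> A"
    and X: "X \<in> carrier_mat d d"
  shows "\<phi> X = (\<Sum>a<d. \<Sum>b<d. X $$ (a,b) * \<phi> (mat_unit d a b))"
proof -
  have "restrict_mat d X ({..<d} \<times> {..<d}) = X"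
    unfolding restrict_mat_def using X by (intro eq_matI) auto
  then show ?thesis
    using linear_functional_restrict_mat[OF assms(1,2), where d = d and S = "{..<d} \<times> {..<d}" and X = X]
    by (simp add: sum.cartesian_product)
qed

lemma mtrace_lin_map_expand:
  assumes N: "lin_map dA dB N" and Y: "Y \<in> carrier_mat dB dB" and X: "X \<in> carrier_mat dA dA"
  shows "mtrace (Y * N X) = (\<Sum>a<dA. \<Sum>b<dA. X $$ (a,b) * mtrace (Y * N (mat_unit dA a b)))"
proof (rule linear_functional_expand[OF _ _ X])
  fix A B :: "complex mat" assume "A \<in> carrier_mat dA dA" "B \<in> carrier_mat dA dA"
  moreover from this have "N A \<in> carrier_mat dB dB" "N B \<in> carrier_mat dB dB"
    using N unfolding lin_map_def by auto
  ultimately show "mtrace (Y * N (A + B)) = mtrace (Y * N A) + mtrace (Y * N B)"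
    using N unfolding lin_map_def
    by (auto simp: mtrace_mult[OF Y] distrib_left sum.distrib[symmetric] intro!: sum.cong)
next
  fix c and A :: "complex mat" assume "A \<in> carrier_mat dA dA"
  moreover from this have "N A \<in> carrier_mat dB dB"
    using N unfolding lin_map_def by auto
  ultimately show "mtrace (Y * N (c \<cdot>\<^sub>m A)) = c * mtrace (Y * N A)"
    using N unfolding lin_map_def
    by (auto simp: mtrace_mult[OF Y] sum_distrib_left mult_ac intro!: sum.cong)
qed

lemma ampl_one:
  assumes "lin_map dA dB N" "X \<in> carrier_mat dA dA"
  shows "ampl 1 dA dB N X = N X"
proof -
  have "N X \<in> carrier_mat dB dB" using assms unfolding lin_map_def by blast
  moreover have "mat dA dA (\<lambda>(p,q). X $$ (p, q)) = X" using assms(2) by (intro eq_matI) auto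
  ultimately show ?thesis unfolding ampl_def by (intro eq_matI) auto
qed

lemma quantum_channel_psd:
  assumes N: "quantum_channel dA dB N" and X: "psd dA X"
  shows "psd dB (N X)"
proof -
  have "psd (1 * dA) X" using X by simp
  then have "psd (1 * dB) (ampl 1 dA dB N X)"
    using N unfolding quantum_channel_def completely_positive_def by blast
  then show ?thesis
    using ampl_one[OF _ psd_carrier[OF X]] N unfolding quantum_channel_def by simp
qed

lemma quantum_channel_density:
  assumes N: "quantum_channel dA dB N" and \<rho>: "density dA \<rho>"
  shows "density dB (N \<rho>)"
  using quantum_channel_psd[OF N] N \<rho> psd_carrier[of dA \<rho>]
  unfolding density_def quantum_channel_def trace_preserving_def by auto

definition dual_map :: "nat \<Rightarrow> (complex mat \<Rightarrow> complex mat) \<Rightarrow> complex mat \<Rightarrow> complex mat" where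
  "dual_map dA N Y = mat dA dA (\<lambda>(b,a). mtrace (Y * N (mat_unit dA a b)))"

lemma dual_map_carrier [simp]: "dual_map dA N Y \<in> carrier_mat dA dA"
  unfolding dual_map_def by simp

lemma mtrace_dual_map:
  assumes N: "lin_map dA dB N" and Y: "Y \<in> carrier_mat dB dB" and X: "X \<in> carrier_mat dA dA"
  shows "mtrace (Y * N X) = mtrace (dual_map dA N Y * X)"
proof -
  have "mtrace (Y * N X) = (\<Sum>a<dA. \<Sum>b<dA. X $$ (a,b) * mtrace (Y * N (mat_unit dA a b)))"
    using mtrace_lin_map_expand[OF N Y X] .
  also have "\<dots> = (\<Sum>b<dA. \<Sum>a<dA. dual_map dA N Y $$ (b,a) * X $$ (a,b))"
    by (subst sum.swap) (simp add: dual_map_def mult.commute)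
  also have "\<dots> = mtrace (dual_map dA N Y * X)"
    using mtrace_mult[OF dual_map_carrier X] by simp
  finally show ?thesis .
qed

lemma psd_dual_map:
  assumes N: "quantum_channel dA dB N" and Y: "psd dB Y"
  shows "psd dA (dual_map dA N Y)"
  unfolding psd_iff_psd_form psd_form_def
proof (intro conjI allI dual_map_carrier)
  fix f
  let ?X = "mat dA dA (\<lambda>(a,b). f a * cnj (f b))"
  have lin: "lin_map dA dB N" using N unfolding quantum_channel_def by blast
  have "0 \<le> mtrace (Y * N ?X)"
    using mtrace_mult_psd_nonneg[OF Y quantum_channel_psd[OF N psd_rank_one]] .
  also have "\<dots> = mtrace (dual_map dA N Y * ?X)"
    using mtrace_dual_map[OF lin psd_carrier[OF Y]] by simp
  also have "\<dots> = (\<Sum>i<dA. \<Sum>j<dA. dual_map dA N Y $$ (i,j) * ?X $$ (j,i))"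
    by (rule mtrace_mult) simp_all
  also have "\<dots> = sesq dA (\<lambda>i j. dual_map dA N Y $$ (i,j)) f f"
    unfolding sesq_def by (auto simp: mult_ac intro!: sum.cong)
  finally show "0 \<le> sesq dA (\<lambda>i j. dual_map dA N Y $$ (i,j)) f f" .
qed

lemma povm_sum_mtrace:
  assumes \<Lambda>: "povm d m \<Lambda>" and Y: "Y \<in> carrier_mat d d"
  shows "(\<Sum>j<m. mtrace (\<Lambda> j * Y)) = mtrace Y"
proof -
  have "(\<Sum>j<m. mtrace (\<Lambda> j * Y)) = (\<Sum>j<m. \<Sum>p<d. \<Sum>q<d. \<Lambda> j $$ (p,q) * Y $$ (q,p))"
    using \<Lambda> by (intro sum.cong refl mtrace_mult[OF psd_carrier Y]) (auto simp: povm_def)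
  also have "\<dots> = (\<Sum>p<d. \<Sum>q<d. (\<Sum>j<m. \<Lambda> j $$ (p,q)) * Y $$ (q,p))"
    by (simp add: sum_distrib_right sum.swap[of _ "{..<m}"])
  also have "\<dots> = (\<Sum>p<d. \<Sum>q<d. if p = q then Y $$ (q,p) else 0)"
    using \<Lambda> unfolding povm_def by (intro sum.cong refl) auto
  also have "\<dots> = (\<Sum>p<d. Y $$ (p,p))"
    by simp
  also have "\<dots> = mtrace Y" unfolding mtrace_def using Y by simp
  finally show ?thesis .
qed

lemma povm_dual_map:
  assumes N: "quantum_channel dA dB N" and \<Lambda>: "povm dB m \<Lambda>"
  shows "povm dA m (\<lambda>j. dual_map dA N (\<Lambda> j))"
  unfolding povm_def
proof (intro conjI allI impI)
  fix j assume "j < m"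
  then show "psd dA (dual_map dA N (\<Lambda> j))"
    using \<Lambda> psd_dual_map[OF N] unfolding povm_def by blast
next
  fix a b assume ab: "a < dA" "b < dA"
  have lin: "lin_map dA dB N" and tp: "trace_preserving dA N"
    using N unfolding quantum_channel_def by auto
  have "(\<Sum>j<m. dual_map dA N (\<Lambda> j) $$ (a,b)) = (\<Sum>j<m. mtrace (\<Lambda> j * N (mat_unit dA b a)))"
    using ab by (simp add: dual_map_def)
  also have "\<dots> = mtrace (mat_unit dA b a)"
    using povm_sum_mtrace[OF \<Lambda>] lin tp unfolding lin_map_def trace_preserving_def by simp
  finally show "(\<Sum>j<m. dual_map dA N (\<Lambda> j) $$ (a,b)) = (if a = b then 1 else 0)"
    using ab by (simp add: mtrace_mat_unit)
qed

lemma channel_matrices_subset_output: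
  assumes N: "quantum_channel dA dB N"
  shows "channel_matrices dA dB N n m \<subseteq> quantum_matrices dB n m"
proof
  fix P assume "P \<in> channel_matrices dA dB N n m"
  then obtain \<rho> \<Lambda> where "\<forall>i<n. density dA (\<rho> i)" "povm dB m \<Lambda>"
    and "P = mat n m (\<lambda>(i,j). mtrace (\<Lambda> j * N (\<rho> i)))"
    unfolding channel_matrices_def by blast
  then show "P \<in> quantum_matrices dB n m"
    using quantum_channel_density[OF N] unfolding quantum_matrices_def channel_matrices_def
    by (intro CollectI exI[of _ "\<lambda>i. N (\<rho> i)"] exI[of _ \<Lambda>]) simp
qed

lemma channel_matrices_subset_input:
  assumes N: "quantum_channel dA dB N"
  shows "channel_matrices dA dB N n m \<subseteq> quantum_matrices dA n m"
proof
  fix P assume "P \<in> channel_matrices dA dB N n m"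
  then obtain \<rho> \<Lambda> where \<rho>: "\<forall>i<n. density dA (\<rho> i)" and \<Lambda>: "povm dB m \<Lambda>"
    and P: "P = mat n m (\<lambda>(i,j). mtrace (\<Lambda> j * N (\<rho> i)))"
    unfolding channel_matrices_def by blast
  have "P = mat n m (\<lambda>(i,j). mtrace (dual_map dA N (\<Lambda> j) * id (\<rho> i)))"
    unfolding P
  proof (intro cong_mat refl)
    fix i j assume "i < n" "j < m"
    then show "(case (i, j) of (i, j) \<Rightarrow> mtrace (\<Lambda> j * N (\<rho> i))) =
        (case (i, j) of (i, j) \<Rightarrow> mtrace (dual_map dA N (\<Lambda> j) * id (\<rho> i)))"
      using N \<rho> \<Lambda> mtrace_dual_map[of dA dB N "\<Lambda> j" "\<rho> i"]
      unfolding quantum_channel_def density_def povm_def by (simp add: psd_carrier)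
  qed
  then show "P \<in> quantum_matrices dA n m"
    using \<rho> povm_dual_map[OF N \<Lambda>] unfolding quantum_matrices_def channel_matrices_def by blast
qed

theorem proposition1:
  fixes dA dB :: nat and N :: "complex mat \<Rightarrow> complex mat"
  assumes "quantum_channel dA dB N"
  shows "\<forall>n m. channel_matrices dA dB N n m \<subseteq> quantum_matrices (min dA dB) n m"
  using channel_matrices_subset_input[OF assms] channel_matrices_subset_output[OF assms]
  by (simp add: min_def)

end
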